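(* Let $p\ge1$, $\phi_1,\dots,\phi_p:\mathbb Z\to\mathbb C$, $v:\mathbb Z\to\mathbb C$, $s\in\mathbb Z$, complex numbers $y_{s},y_{s-1},\dots,y_{s-p+1}$, and an integer $t>s$. Then $$\sum_{m=1}^{p}\sum_{j=1}^{p-m+1}\phi_{m+j-1}(s+j)H(t,s+j)y_{s-m+1}+\sum_{j=1}^{t-s}H(t,s+j)v_{s+j}=\det N,$$ where $N$ is the $(t-s)\times(t-s)$ matrix obtained from $\Phi_{t,s}$ by replacing its first column with $(w_1,\dots,w_{t-s})^T$, $w_i=\sum_{m=1}^{p}y_{s-m+1}\,\phi_{m+i-1}(s+i)+v_{s+i}$.
   Context: Convention: $\phi_l=0$ for $l>p$. $\Gamma_t$ is the $p\times p$ companion matrix with first row $(\phi_1(t),\dots,\phi_p(t))$, entries $(i,i-1)$ equal to $1$ for $2\le i\le p$, other entries $0$. The Green's function: for integers $u$ and $t\ge u-p+1$, $H(t,u)$ is the $(1,1)$ entry of $\Gamma_t\Gamma_{t-1}\cdots\Gamma_{u+1}$ if $t>u$; $H(u,u)=1$; $H(t,u)=0$ if $u-p+1\le t<u$. For $t>s$, $\Phi_{t,s}$ is the $(t-s)\times(t-s)$ matrix with $(i,j)$ entry $-1$ if $j=i+1$, $\phi_{i-j+1}(s+i)$ if $1\le j\le i$, $0$ if $j>i+1$. *)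

theory Defs
  imports "Jordan_Normal_Form.Determinant"
begin

definition phiE :: "nat \<Rightarrow> (nat \<Rightarrow> int \<Rightarrow> complex) \<Rightarrow> nat \<Rightarrow> int \<Rightarrow> complex" where
  "phiE p phi l t = (if 1 \<le> l \<and> l \<le> p then phi l t else 0)"

definition Gam :: "nat \<Rightarrow> (nat \<Rightarrow> int \<Rightarrow> complex) \<Rightarrow> int \<Rightarrow> complex mat" where
  "Gam p phi t = mat p p (\<lambda>(i,j). if i = 0 then phiE p phi (j+1) t
                                   else if j + 1 = i then 1 else 0)"

fun GamProd :: "nat \<Rightarrow> (nat \<Rightarrow> int \<Rightarrow> complex) \<Rightarrow> int \<Rightarrow> nat \<Rightarrow> complex mat" where
  "GamProd p phi u 0 = 1\<^sub>m p"
| "GamProd p phi u (Suc k) = Gam p phi (u + int k + 1) * GamProd p phi u k"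

text \<open>Green's function H(t,u) (meaningful for t \<ge> u - p + 1).\<close>
definition Hgreen :: "nat \<Rightarrow> (nat \<Rightarrow> int \<Rightarrow> complex) \<Rightarrow> int \<Rightarrow> int \<Rightarrow> complex" where
  "Hgreen p phi t u =
     (if t > u then GamProd p phi u (nat (t - u)) $$ (0,0)
      else if t = u then 1 else 0)"

text \<open>Phi_{t,s}: (t-s)x(t-s) matrix; 1-based entry (i,j) is -1 if j = i+1,
  phi_{i-j+1}(s+i) if j \<le> i, 0 otherwise. Below with 0-based indices.\<close>
definition PhiMat :: "nat \<Rightarrow> (nat \<Rightarrow> int \<Rightarrow> complex) \<Rightarrow> int \<Rightarrow> int \<Rightarrow> complex mat" where
  "PhiMat p phi t s = mat (nat (t - s)) (nat (t - s)) (\<lambda>(i,j).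
      if j = i + 1 then -1
      else if j \<le> i then phiE p phi (i - j + 1) (s + int i + 1)
      else 0)"

definition wvec :: "nat \<Rightarrow> (nat \<Rightarrow> int \<Rightarrow> complex) \<Rightarrow> (int \<Rightarrow> complex) \<Rightarrow> (int \<Rightarrow> complex)
                     \<Rightarrow> int \<Rightarrow> nat \<Rightarrow> complex" where
  "wvec p phi v y s i = (\<Sum>m=1..p. y (s - int m + 1) * phiE p phi (m + i - 1) (s + int i)) + v (s + int i)"

definition NMat :: "nat \<Rightarrow> (nat \<Rightarrow> int \<Rightarrow> complex) \<Rightarrow> (int \<Rightarrow> complex) \<Rightarrow> (int \<Rightarrow> complex)
                     \<Rightarrow> int \<Rightarrow> int \<Rightarrow> complex mat" where
  "NMat p phi v y t s = mat (nat (t - s)) (nat (t - s)) (\<lambda>(i,j).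
      if j = 0 then wvec p phi v y s (i + 1) else PhiMat p phi t s $$ (i,j))"

end

theory Submission
  imports Defs
begin

text \<open>N is lower Hessenberg with -1 on the superdiagonal, so expanding det N along its
  last row shows that the leading principal minors D_k satisfy the inhomogeneous difference
  equation D_{k+1} = w_{k+1} + \<Sum>_j phi_{k-j+1}(s+k+1) D_j. Each H(., s+i) solves the
  homogeneous equation with H(s+i, s+i) = 1, so by superposition D_k = \<Sum>_i w_i H(s+k, s+i);
  expanding w_i and discarding the terms in which phi_l (l > p) or H(t, u) (t < u) vanish
  gives the left-hand side.\<close>

lemma det_lower_hessenberg_last_row:
  fixes a :: "nat \<Rightarrow> nat \<Rightarrow> 'a :: comm_ring_1"
  assumes "\<And>i. i < k \<Longrightarrow> a i (Suc i) = -1"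
    and "\<And>i j. i < k \<Longrightarrow> Suc i < j \<Longrightarrow> a i j = 0"
  shows "det (mat (Suc k) (Suc k) (\<lambda>(i,j). a i j))
         = (\<Sum>j\<le>k. a k j * det (mat j j (\<lambda>(i,j). a i j)))"
  using assms
proof (induction k arbitrary: a)
  case 0
  show ?case by (simp add: det_single)
next
  case (Suc k)
  let ?A = "mat (Suc (Suc k)) (Suc (Suc k)) (\<lambda>(i,j). a i j)"
  let ?expansion_term = "\<lambda>i. ?A $$ (i, Suc k) * cofactor ?A i (Suc k)"
  \<comment> \<open>Deleting row k and the last column moves the last row up to position k.\<close>
  define a' where "a' i j = (if i = k then a (Suc k) j else a i j)" for i j
  have leading_a': "mat j j (\<lambda>(i,j). a' i j) = mat j j (\<lambda>(i,j). a i j)" if "j \<le> k" for j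
    using that by (intro eq_matI) (auto simp: a'_def)
  have "det ?A = (\<Sum>i<Suc (Suc k). ?expansion_term i)"
    by (rule laplace_expansion_column) auto
  also have "\<dots> = ?expansion_term k + ?expansion_term (Suc k)"
    using Suc.prems(2) by (simp add: sum.neutral)
  also have "?expansion_term k = det (mat (Suc k) (Suc k) (\<lambda>(i,j). a' i j))"
  proof -
    have "mat_delete ?A k (Suc k) = mat (Suc k) (Suc k) (\<lambda>(i,j). a' i j)"
      by (rule eq_matI) (auto simp: mat_delete_def a'_def)
    then show ?thesis using Suc.prems(1) by (simp add: cofactor_def)
  qed
  also have "\<dots> = (\<Sum>j\<le>k. a (Suc k) j * det (mat j j (\<lambda>(i,j). a i j)))"
  proof -
    have "det (mat (Suc k) (Suc k) (\<lambda>(i,j). a' i j))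
          = (\<Sum>j\<le>k. a' k j * det (mat j j (\<lambda>(i,j). a' i j)))"
      by (rule Suc.IH) (use Suc.prems in \<open>auto simp: a'_def\<close>)
    also have "\<dots> = (\<Sum>j\<le>k. a (Suc k) j * det (mat j j (\<lambda>(i,j). a i j)))"
      by (intro sum.cong refl) (simp add: leading_a' a'_def[of k])
    finally show ?thesis .
  qed
  also have "?expansion_term (Suc k) = a (Suc k) (Suc k) * det (mat (Suc k) (Suc k) (\<lambda>(i,j). a i j))"
  proof -
    have "mat_delete ?A (Suc k) (Suc k) = mat (Suc k) (Suc k) (\<lambda>(i,j). a i j)"
      by (rule eq_matI) (auto simp: mat_delete_def)
    then show ?thesis by (simp add: cofactor_def)
  qed
  finally show ?case by simp
qed

lemma GamProd_dim [simp]: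
  "dim_row (GamProd p phi u m) = p" "dim_col (GamProd p phi u m) = p"
  by (induction m) (auto simp: Gam_def)

lemma Hgreen_less: "t < u \<Longrightarrow> Hgreen p phi t u = 0"
  by (simp add: Hgreen_def)

text \<open>Below its first row the companion matrix is a shift, so the first column of
  the product carries the last p values of the Green's function.\<close>
lemma GamProd_first_col:
  "c < p \<Longrightarrow> GamProd p phi u m $$ (c,0) = Hgreen p phi (u + int m - int c) u"
proof (induction m arbitrary: c)
  case 0
  then show ?case by (auto simp: Hgreen_def)
next
  case (Suc m)
  show ?case
  proof (cases c)
    case 0
    have "nat (1 + int m) = Suc m" by simp
    with 0 show ?thesis by (simp add: Hgreen_def del: GamProd.simps)
  next
    case (Suc c')
    have "GamProd p phi u (Suc m) $$ (c,0)
          = (\<Sum>k<p. Gam p phi (u + int m + 1) $$ (c,k) * GamProd p phi u m $$ (k,0))"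
      using Suc.prems by (simp add: scalar_prod_def Gam_def lessThan_atLeast0)
    also have "\<dots> = (\<Sum>k<p. if k = c' then GamProd p phi u m $$ (k,0) else 0)"
      by (rule sum.cong) (use Suc.prems Suc in \<open>auto simp: Gam_def\<close>)
    also have "\<dots> = GamProd p phi u m $$ (c',0)"
      using Suc Suc.prems by simp
    also have "\<dots> = Hgreen p phi (u + int m - int c') u"
      using Suc.prems Suc Suc.IH by simp
    finally show ?thesis using Suc by (simp add: algebra_simps)
  qed
qed

lemma Hgreen_Suc:
  assumes "p > 0"
  shows "Hgreen p phi (u + int (Suc m)) u
         = (\<Sum>k<p. phiE p phi (k+1) (u + int m + 1) * Hgreen p phi (u + int m - int k) u)"
proof -
  have "nat (1 + int m) = Suc m" by simp
  then have "Hgreen p phi (u + int (Suc m)) u = GamProd p phi u (Suc m) $$ (0,0)"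
    by (simp add: Hgreen_def del: GamProd.simps)
  also have "\<dots> = (\<Sum>k<p. Gam p phi (u + int m + 1) $$ (0,k) * GamProd p phi u m $$ (k,0))"
    using assms by (simp add: scalar_prod_def Gam_def lessThan_atLeast0)
  also have "\<dots> = (\<Sum>k<p. phiE p phi (k+1) (u + int m + 1) * Hgreen p phi (u + int m - int k) u)"
    by (rule sum.cong) (auto simp: Gam_def GamProd_first_col)
  finally show ?thesis .
qed

lemma Hgreen_homogeneous_recurrence:
  assumes "p > 0" "1 \<le> i" "i \<le> k"
  shows "Hgreen p phi (s + int (Suc k)) (s + int i)
         = (\<Sum>j=1..k. phiE p phi (k - j + 1) (s + int k + 1) * Hgreen p phi (s + int j) (s + int i))"
proof -
  define g where "g l = phiE p phi l (s + int k + 1) * Hgreen p phi (s + int k + 1 - int l) (s + int i)" for l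
  have g_vanishes: "g l = 0" if "l > p \<or> l > k" for l
    using that assms by (auto simp: g_def phiE_def Hgreen_less)
  have "Hgreen p phi (s + int (Suc k)) (s + int i)
        = Hgreen p phi ((s + int i) + int (Suc (k - i))) (s + int i)"
    using assms by simp
  also have "\<dots> = (\<Sum>c<p. g (Suc c))"
    unfolding Hgreen_Suc[OF assms(1)] g_def
    by (rule sum.cong) (use assms in \<open>auto simp: algebra_simps\<close>)
  also have "\<dots> = (\<Sum>l=1..p. g l)"
    by (simp add: sum.atLeast1_atMost_eq)
  also have "\<dots> = (\<Sum>l=1..p+k. g l)"
    by (rule sum.mono_neutral_left) (auto intro: g_vanishes)
  also have "\<dots> = (\<Sum>l=1..k. g l)"
    by (rule sum.mono_neutral_right) (auto intro: g_vanishes)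
  also have "\<dots> = (\<Sum>j=1..k. g (k + 1 - j))"
    by (subst sum.atLeastAtMost_rev) simp
  also have "\<dots> = (\<Sum>j=1..k. phiE p phi (k - j + 1) (s + int k + 1) * Hgreen p phi (s + int j) (s + int i))"
    by (rule sum.cong) (auto simp: g_def Suc_diff_le)
  finally show ?thesis .
qed

definition NMat_entry :: "nat \<Rightarrow> (nat \<Rightarrow> int \<Rightarrow> complex) \<Rightarrow> (int \<Rightarrow> complex) \<Rightarrow> (int \<Rightarrow> complex)
    \<Rightarrow> int \<Rightarrow> nat \<Rightarrow> nat \<Rightarrow> complex" where
  "NMat_entry p phi v y s i j =
     (if j = 0 then wvec p phi v y s (i+1)
      else if j = i+1 then -1
      else if j \<le> i then phiE p phi (i-j+1) (s + int i + 1)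
      else 0)"

lemma NMat_eq_mat: "NMat p phi v y (s + int k) s = mat k k (\<lambda>(i,j). NMat_entry p phi v y s i j)"
  by (rule eq_matI) (auto simp: NMat_def PhiMat_def NMat_entry_def)

lemma det_NMat_recurrence:
  "det (NMat p phi v y (s + int (Suc k)) s)
   = wvec p phi v y s (Suc k)
     + (\<Sum>j=1..k. phiE p phi (k - j + 1) (s + int k + 1) * det (NMat p phi v y (s + int j) s))"
proof -
  let ?a = "NMat_entry p phi v y s"
  have "det (NMat p phi v y (s + int (Suc k)) s) = (\<Sum>j\<le>k. ?a k j * det (mat j j (\<lambda>(i,j). ?a i j)))"
    unfolding NMat_eq_mat by (rule det_lower_hessenberg_last_row) (auto simp: NMat_entry_def)
  also have "{..k} = insert 0 {1..k}"
    by auto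
  also have "(\<Sum>j\<in>insert 0 {1..k}. ?a k j * det (mat j j (\<lambda>(i,j). ?a i j)))
             = ?a k 0 + (\<Sum>j=1..k. ?a k j * det (NMat p phi v y (s + int j) s))"
    by (simp add: NMat_eq_mat)
  also have "(\<Sum>j=1..k. ?a k j * det (NMat p phi v y (s + int j) s))
             = (\<Sum>j=1..k. phiE p phi (k - j + 1) (s + int k + 1) * det (NMat p phi v y (s + int j) s))"
    by (rule sum.cong) (auto simp: NMat_entry_def)
  finally show ?thesis
    by (simp add: NMat_entry_def)
qed

lemma det_NMat_eq_Green_sum:
  assumes "p > 0"
  shows "det (NMat p phi v y (s + int (Suc k)) s)
         = (\<Sum>i=1..Suc k. wvec p phi v y s i * Hgreen p phi (s + int (Suc k)) (s + int i))"
proof (induction k rule: less_induct)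
  case (less k)
  let ?w = "wvec p phi v y s" and ?H = "Hgreen p phi"
  let ?c = "\<lambda>j. phiE p phi (k - j + 1) (s + int k + 1)"
  have earlier: "det (NMat p phi v y (s + int j) s) = (\<Sum>i=1..k. ?w i * ?H (s + int j) (s + int i))"
    if j: "j \<in> {1..k}" for j
  proof -
    obtain j' where j': "j = Suc j'" using j by (cases j) auto
    have "det (NMat p phi v y (s + int j) s) = (\<Sum>i=1..j. ?w i * ?H (s + int j) (s + int i))"
      using less[of j'] j j' by simp
    also have "\<dots> = (\<Sum>i=1..k. ?w i * ?H (s + int j) (s + int i))"
      by (rule sum.mono_neutral_left) (use j in \<open>auto simp: Hgreen_less\<close>)
    finally show ?thesis .
  qed
  have "det (NMat p phi v y (s + int (Suc k)) s)
        = ?w (Suc k) + (\<Sum>j=1..k. ?c j * det (NMat p phi v y (s + int j) s))"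
    by (rule det_NMat_recurrence)
  also have "\<dots> = ?w (Suc k) + (\<Sum>j=1..k. ?c j * (\<Sum>i=1..k. ?w i * ?H (s + int j) (s + int i)))"
    by (simp add: earlier)
  also have "\<dots> = ?w (Suc k) + (\<Sum>i=1..k. ?w i * (\<Sum>j=1..k. ?c j * ?H (s + int j) (s + int i)))"
    unfolding sum_distrib_left by (subst sum.swap) (simp add: mult_ac)
  also have "\<dots> = ?w (Suc k) + (\<Sum>i=1..k. ?w i * ?H (s + int (Suc k)) (s + int i))"
    using Hgreen_homogeneous_recurrence[OF assms] by simp
  also have "\<dots> = (\<Sum>i=1..Suc k. ?w i * ?H (s + int (Suc k)) (s + int i))"
    by (simp add: Hgreen_def)
  finally show ?case .
qed

lemma Green_sum_eq_wvec_sum: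
  assumes "t = s + int n"
  shows "(\<Sum>m=1..p. \<Sum>j=1..p-m+1.
            phiE p phi (m + j - 1) (s + int j) * Hgreen p phi t (s + int j) * y (s - int m + 1))
         + (\<Sum>j=1..n. Hgreen p phi t (s + int j) * v (s + int j))
         = (\<Sum>j=1..n. wvec p phi v y s j * Hgreen p phi t (s + int j))"
proof -
  define F where "F m j = phiE p phi (m + j - 1) (s + int j) * Hgreen p phi t (s + int j) * y (s - int m + 1)" for m j
  have truncate: "(\<Sum>j=1..p-m+1. F m j) = (\<Sum>j=1..n. F m j)" if m: "m \<in> {1..p}" for m
  proof -
    have "(\<Sum>j=1..p-m+1. F m j) = (\<Sum>j=1..p+n. F m j)"
      by (rule sum.mono_neutral_left) (use m in \<open>auto simp: F_def phiE_def\<close>)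
    also have "\<dots> = (\<Sum>j=1..n. F m j)"
      by (rule sum.mono_neutral_right) (auto simp: F_def assms Hgreen_less)
    finally show ?thesis .
  qed
  have "(\<Sum>m=1..p. \<Sum>j=1..p-m+1. F m j) = (\<Sum>m=1..p. \<Sum>j=1..n. F m j)"
    by (rule sum.cong[OF refl truncate])
  also have "\<dots> = (\<Sum>j=1..n. \<Sum>m=1..p. F m j)"
    by (rule sum.swap)
  finally have "(\<Sum>m=1..p. \<Sum>j=1..p-m+1. F m j) + (\<Sum>j=1..n. Hgreen p phi t (s + int j) * v (s + int j))
        = (\<Sum>j=1..n. (\<Sum>m=1..p. F m j) + Hgreen p phi t (s + int j) * v (s + int j))"
    by (simp add: sum.distrib)
  also have "\<dots> = (\<Sum>j=1..n. wvec p phi v y s j * Hgreen p phi t (s + int j))"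
    by (simp add: F_def wvec_def distrib_left sum_distrib_left mult_ac)
  finally show ?thesis unfolding F_def .
qed

theorem proposition6:
  fixes p :: nat and phi :: "nat \<Rightarrow> int \<Rightarrow> complex" and v y :: "int \<Rightarrow> complex"
    and s t :: int
  assumes "p \<ge> 1" and "t > s"
  shows "(\<Sum>m=1..p. \<Sum>j=1..p-m+1.
            phiE p phi (m + j - 1) (s + int j) * Hgreen p phi t (s + int j) * y (s - int m + 1))
         + (\<Sum>j=1..nat (t - s). Hgreen p phi t (s + int j) * v (s + int j))
         = det (NMat p phi v y t s)"
proof -
  obtain k where k: "nat (t - s) = Suc k"
    using assms(2) by (metis gr0_implies_Suc zero_less_nat_eq diff_gt_0_iff_gt)
  then have t: "t = s + int (Suc k)"
    using assms(2) by simp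
  show ?thesis
    unfolding Green_sum_eq_wvec_sum[OF t] k
    using det_NMat_eq_Green_sum[of p phi v y s k] assms(1) t by (simp add: mult.commute)
qed

end
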